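(* Every linear flow is parabolic or hyperbolic.
   Context: A linear flow is an injective homomorphism $\Phi:\mathbb{R}\to\mathrm{PGL}(n+1,\mathbb{R})$ such that the orbit of every point of $\mathbb{RP}^n$ is a proper subset of a projective line. A reparameterization of $\Phi$ is $\Phi\circ\phi$ for an isomorphism $\phi:\mathbb{R}\to\mathbb{R}$. A linear flow is parabolic if, after reparameterization, there is $\pi\in\mathrm{End}(\mathbb{R}^{n+1})$ with $\pi^2=0$ and $\Phi_t[x]=[x+t\pi(x)]$ for all $t$ and $x$. It is hyperbolic if, after reparameterization, there is a direct sum decomposition $\mathbb{R}^{n+1}=A\oplus B$ with $\Phi_t[a+b]=[a+e^t b]$ for all $a\in A$, $b\in B$, $t\in\mathbb{R}$. *)

theory Defs
  imports "HOL-Analysis.Analysis"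
begin

text \<open>Vectors of \<open>real ^ 'n\<close> model R^(n+1); a point of RP^n is the class [x] of a
nonzero vector x.\<close>

definition proj_eq :: "real ^ 'n \<Rightarrow> real ^ 'n \<Rightarrow> bool" where
  "proj_eq x y \<longleftrightarrow> (\<exists>c. c \<noteq> 0 \<and> x = c *\<^sub>R y)"

text \<open>A map \<open>\<Phi> : R \<rightarrow> PGL(n+1,R)\<close> is given by a (continuous) lift
\<open>M : R \<rightarrow> GL(n+1,R)\<close>, with \<open>\<Phi>_t = [M t]\<close>, so \<open>\<Phi>_t [x] = [M t *v x]\<close>.\<close>

definition is_proj_hom :: "(real \<Rightarrow> real ^ 'n ^ 'n) \<Rightarrow> bool" where
  "is_proj_hom M \<longleftrightarrow>
     (\<forall>t. invertible (M t)) \<and>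
     (\<forall>s t. \<exists>c. c \<noteq> 0 \<and> M (s + t) = c *\<^sub>R (M s ** M t))"

definition proj_injective :: "(real \<Rightarrow> real ^ 'n ^ 'n) \<Rightarrow> bool" where
  "proj_injective M \<longleftrightarrow> (\<forall>s t. (\<exists>c. c \<noteq> 0 \<and> M s = c *\<^sub>R M t) \<longrightarrow> s = t)"

text \<open>The orbit of [x] is a proper subset of a projective line P (P a 2-dim subspace).\<close>
definition orbit_in_proper_line :: "(real \<Rightarrow> real ^ 'n ^ 'n) \<Rightarrow> real ^ 'n \<Rightarrow> bool" where
  "orbit_in_proper_line M x \<longleftrightarrow>
     (\<exists>P. subspace P \<and> dim P = 2 \<and> (\<forall>t. M t *v x \<in> P) \<and>
          (\<exists>y\<in>P. y \<noteq> 0 \<and> (\<forall>t. \<not> proj_eq y (M t *v x))))"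

definition linear_flow :: "(real \<Rightarrow> real ^ 'n ^ 'n) \<Rightarrow> bool" where
  "linear_flow M \<longleftrightarrow>
     continuous_on UNIV M \<and> is_proj_hom M \<and> proj_injective M \<and>
     (\<forall>x. x \<noteq> 0 \<longrightarrow> orbit_in_proper_line M x)"

definition reparam :: "(real \<Rightarrow> real) \<Rightarrow> bool" where
  "reparam \<phi> \<longleftrightarrow> bij \<phi> \<and> continuous_on UNIV \<phi> \<and> (\<forall>s t. \<phi> (s + t) = \<phi> s + \<phi> t)"

definition parabolic :: "(real \<Rightarrow> real ^ 'n ^ 'n) \<Rightarrow> bool" where
  "parabolic M \<longleftrightarrow>
     (\<exists>\<phi> \<pi>. reparam \<phi> \<and> \<pi> ** \<pi> = 0 \<and>
        (\<forall>t x. x \<noteq> 0 \<longrightarrow> proj_eq (M (\<phi> t) *v x) (x + t *\<^sub>R (\<pi> *v x))))"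

definition hyperbolic :: "(real \<Rightarrow> real ^ 'n ^ 'n) \<Rightarrow> bool" where
  "hyperbolic M \<longleftrightarrow>
     (\<exists>\<phi> A B. reparam \<phi> \<and> subspace A \<and> subspace B \<and> A \<inter> B = {0} \<and>
        {a + b | a b. a \<in> A \<and> b \<in> B} = UNIV \<and>
        (\<forall>a b t. a \<in> A \<longrightarrow> b \<in> B \<longrightarrow> a + b \<noteq> 0 \<longrightarrow>
           proj_eq (M (\<phi> t) *v (a + b)) (a + exp t *\<^sub>R b)))"

end

theory Submission
  imports Defs
begin

(* Write M t = c t P t with P a continuous one-parameter subgroup of GL(n+1): normalising
   det M t to absolute value 1 leaves a sign ambiguity, which is constant by connectedness.
   Such a group is differentiable, P' = X P.  If the orbit of u lies in a plane S, then
   differentiating shows that X u and X\<^sup>2 u lie in S too, so X\<^sup>2 u is in span {u, X u}.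
   Since this holds for every u, a perturbation-and-limit argument shows that X satisfies
   a single quadratic relation.  According to its roots, P t acts by e^(r1 t) and e^(r2 t) on two
   complementary eigenspaces (hyperbolic), or P t = e^(r t) (I + t \<pi>) with \<pi>\<^sup>2 = 0
   (parabolic), or P t is a rotation up to scaling; in the last case P (pi / w) is a scalar
   matrix, contradicting injectivity. *)

section \<open>Pairs of vectors and Gram determinants\<close>

lemma not_collinear_lincomb_eq_0:
  assumes "\<not> collinear {0, u, v}" and "a *\<^sub>R u + b *\<^sub>R v = 0"
  shows "a = 0 \<and> b = 0"
proof -
  have "b = 0"
  proof (rule ccontr)
    assume "b \<noteq> 0"
    have "b *\<^sub>R v = - (a *\<^sub>R u)" using assms(2) by (simp add: add_eq_0_iff)
    then have "v = (- a / b) *\<^sub>R u"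
      using \<open>b \<noteq> 0\<close> by (metis divide_inverse_commute scaleR_minus_left scaleR_scaleR vector_fraction_eq_iff)
    then show False using assms(1) collinear_lemma by blast
  qed
  moreover have "u \<noteq> 0" using assms(1) by auto
  ultimately show ?thesis using assms(2) by simp
qed

lemma collinear_imp_scaleR:
  assumes "collinear {0, u, v}" and "u \<noteq> 0"
  shows "\<exists>c. v = c *\<^sub>R u"
  using assms collinear_lemma[of u v] by (metis scaleR_zero_left)

lemma not_collinear_independent:
  assumes "\<not> collinear {0, u, v}"
  shows "independent {u, v}" and "card {u, v} = 2"
proof -
  have "u \<noteq> v" "v \<noteq> 0" using assms by (auto simp: insert_commute)
  moreover have "u \<notin> span {v}"
    using assms collinear_lemma[of v u] by (auto simp: span_singleton insert_commute)
  ultimately show "independent {u, v}" "card {u, v} = 2"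
    by (auto simp: independent_insert)
qed

lemma span_pair_iff: "w \<in> span {u, v} \<longleftrightarrow> (\<exists>a b. w = a *\<^sub>R u + b *\<^sub>R v)"
  by (auto simp: span_insert span_singleton algebra_simps)

lemma subspace_scaleR_mem_imp_eq_0:
  assumes "subspace W" "y \<notin> W" "c *\<^sub>R y \<in> W"
  shows "c = 0"
  using assms subspace_scale[OF assms(1,3), of "1 / c"] by (cases "c = 0") auto

lemma span_pair_inter_subspace:
  assumes "subspace W" "y \<notin> W" "z \<in> W" "w \<in> W" "w \<in> span {y, z}"
  shows "\<exists>c. w = c *\<^sub>R z"
proof -
  obtain c1 c2 where w: "w = c1 *\<^sub>R y + c2 *\<^sub>R z" using assms(5) by (auto simp: span_pair_iff)
  then have c1y: "c1 *\<^sub>R y \<in> W" using assms(1,3,4) by (metis add_diff_cancel_right' subspace_diff subspace_scale)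
  have "c1 = 0" by (rule subspace_scaleR_mem_imp_eq_0[OF assms(1,2) c1y])
  then show ?thesis using w by auto
qed

definition gram_det :: "'a::real_inner \<Rightarrow> 'a \<Rightarrow> real" where
  "gram_det u v = (u \<bullet> u) * (v \<bullet> v) - (u \<bullet> v)\<^sup>2"

lemma gram_det_eq_0_iff: "gram_det u v = 0 \<longleftrightarrow> collinear {0, u, v}"
proof -
  have "gram_det u v = (norm u * norm v)\<^sup>2 - \<bar>u \<bullet> v\<bar>\<^sup>2"
    by (simp add: gram_det_def power_mult_distrib power2_norm_eq_inner)
  moreover have "(norm u * norm v)\<^sup>2 = \<bar>u \<bullet> v\<bar>\<^sup>2 \<longleftrightarrow> \<bar>u \<bullet> v\<bar> = norm u * norm v"
    using power2_eq_iff_nonneg[of "norm u * norm v" "\<bar>u \<bullet> v\<bar>"] by auto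
  ultimately show ?thesis
    by (simp add: norm_cauchy_schwarz_equal)
qed

lemma tendsto_gram_det [tendsto_intros]:
  "(u \<longlongrightarrow> u0) F \<Longrightarrow> (v \<longlongrightarrow> v0) F \<Longrightarrow> ((\<lambda>s. gram_det (u s) (v s)) \<longlongrightarrow> gram_det u0 v0) F"
  unfolding gram_det_def by (intro tendsto_intros)

lemma gram_det_cramer:
  assumes "z \<in> span {u, v}"
  shows "gram_det u v *\<^sub>R z =
    ((z \<bullet> u) * (v \<bullet> v) - (z \<bullet> v) * (u \<bullet> v)) *\<^sub>R u + ((z \<bullet> v) * (u \<bullet> u) - (z \<bullet> u) * (u \<bullet> v)) *\<^sub>R v"
proof -
  obtain a b where "z = a *\<^sub>R u + b *\<^sub>R v" using assms by (auto simp: span_pair_iff)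
  then show ?thesis
    by (simp add: gram_det_def inner_add_left inner_commute power2_eq_square algebra_simps)
qed

lemma eventually_not_collinear:
  fixes u v :: "'b \<Rightarrow> 'a::real_inner"
  assumes "(u \<longlongrightarrow> u0) F" "(v \<longlongrightarrow> v0) F" "\<not> collinear {0, u0, v0}"
  shows "eventually (\<lambda>s. \<not> collinear {0, u s, v s}) F"
proof -
  have "gram_det u0 v0 \<noteq> 0" using assms(3) by (simp add: gram_det_eq_0_iff)
  from tendsto_imp_eventually_ne[OF tendsto_gram_det[OF assms(1,2)] this]
  show ?thesis by eventually_elim (simp add: gram_det_eq_0_iff)
qed

lemma in_span_pair_limit:
  fixes u v :: "'b \<Rightarrow> 'a::real_inner"
  assumes "(u \<longlongrightarrow> u0) F" "(v \<longlongrightarrow> v0) F" "F \<noteq> bot" "\<not> collinear {0, u0, v0}"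
    and "eventually (\<lambda>s. z \<in> span {u s, v s}) F"
  shows "z \<in> span {u0, v0}"
proof -
  define cu where "cu p q = (z \<bullet> p) * (q \<bullet> q) - (z \<bullet> q) * (p \<bullet> q)" for p q
  define cv where "cv p q = (z \<bullet> q) * (p \<bullet> p) - (z \<bullet> p) * (p \<bullet> q)" for p q
  have ev: "eventually (\<lambda>s. cu (u s) (v s) *\<^sub>R u s + cv (u s) (v s) *\<^sub>R v s = gram_det (u s) (v s) *\<^sub>R z) F"
    using assms(5) by eventually_elim (simp add: gram_det_cramer cu_def cv_def)
  have lim: "((\<lambda>s. cu (u s) (v s) *\<^sub>R u s + cv (u s) (v s) *\<^sub>R v s)
      \<longlongrightarrow> cu u0 v0 *\<^sub>R u0 + cv u0 v0 *\<^sub>R v0) F"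
    unfolding cu_def cv_def using assms(1,2) by (intro tendsto_intros)
  have "((\<lambda>s. gram_det (u s) (v s) *\<^sub>R z) \<longlongrightarrow> cu u0 v0 *\<^sub>R u0 + cv u0 v0 *\<^sub>R v0) F"
    by (rule Lim_transform_eventually[OF lim ev])
  moreover have "((\<lambda>s. gram_det (u s) (v s) *\<^sub>R z) \<longlongrightarrow> gram_det u0 v0 *\<^sub>R z) F"
    using assms(1,2) by (intro tendsto_intros)
  ultimately have eq: "gram_det u0 v0 *\<^sub>R z = cu u0 v0 *\<^sub>R u0 + cv u0 v0 *\<^sub>R v0"
    using assms(3) tendsto_unique by blast
  have "gram_det u0 v0 \<noteq> 0" using assms(4) by (simp add: gram_det_eq_0_iff)
  then have "z = (1 / gram_det u0 v0) *\<^sub>R (gram_det u0 v0 *\<^sub>R z)" by simp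
  also have "\<dots> = (cu u0 v0 / gram_det u0 v0) *\<^sub>R u0 + (cv u0 v0 / gram_det u0 v0) *\<^sub>R v0"
    unfolding eq by (simp add: scaleR_add_right)
  finally show ?thesis by (auto simp: span_pair_iff)
qed

section \<open>Locally quadratic linear maps are quadratic\<close>

lemma linear_scalar_if_collinear:
  fixes T :: "'a::real_vector \<Rightarrow> 'a"
  assumes lin: "linear T" and col: "\<And>u. collinear {0, u, T u}"
  shows "\<exists>c. \<forall>u. T u = c *\<^sub>R u"
proof (cases "\<forall>u. T u = 0")
  case True
  then show ?thesis by (intro exI[of _ 0]) simp
next
  case False
  have eigen: "\<exists>c. T u = c *\<^sub>R u" for u
    using col[of u] collinear_imp_scaleR by (cases "u = 0") (auto simp: linear_0[OF lin])
  obtain e where "T e \<noteq> 0" using False by blast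
  then have "e \<noteq> 0" using linear_0[OF lin] by auto
  obtain l where l: "T e = l *\<^sub>R e" using eigen by blast
  have "T y = l *\<^sub>R y" for y
  proof (cases "collinear {0, e, y}")
    case True
    then obtain k where "y = k *\<^sub>R e" using \<open>e \<noteq> 0\<close> by (auto simp: collinear_lemma)
    then show ?thesis using l by (simp add: linear_scale[OF lin])
  next
    case False
    obtain cy where cy: "T y = cy *\<^sub>R y" using eigen by blast
    obtain c where c: "T (e + y) = c *\<^sub>R (e + y)" using eigen by blast
    have "(l - c) *\<^sub>R e + (cy - c) *\<^sub>R y = 0"
      using c l cy by (simp add: linear_add[OF lin] algebra_simps)
    then have "l - c = 0 \<and> cy - c = 0" by (rule not_collinear_lincomb_eq_0[OF False])
    then show ?thesis using cy by simp
  qed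
  then show ?thesis by blast
qed

lemma quadratic_residual_vanishes_on_span:
  fixes T :: "'a::real_vector \<Rightarrow> 'a"
  assumes lin: "linear T" and ab: "T (T x) = a *\<^sub>R x + b *\<^sub>R T x" and w: "w \<in> span {x, T x}"
  shows "T (T w) - b *\<^sub>R T w - a *\<^sub>R w = 0"
proof -
  obtain c1 c2 where "w = c1 *\<^sub>R x + c2 *\<^sub>R T x" using w by (auto simp: span_pair_iff)
  then show ?thesis
    by (simp add: linear_add[OF lin] linear_scale[OF lin] ab algebra_simps)
qed

lemma quadratic_residual_in_span:
  fixes T :: "'a::real_inner \<Rightarrow> 'a"
  assumes lin: "linear T"
    and loc: "\<And>u. \<not> collinear {0, u, T u} \<Longrightarrow> T (T u) \<in> span {u, T u}"
    and x: "\<not> collinear {0, x, T x}" and ab: "T (T x) = a *\<^sub>R x + b *\<^sub>R T x"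
  shows "T (T y) - b *\<^sub>R T y - a *\<^sub>R y \<in> span {x, T x}"
proof -
  note lin_simps = linear_add[OF lin] linear_diff[OF lin] linear_scale[OF lin]
  define N where "N w = T (T w) - b *\<^sub>R T w - a *\<^sub>R w" for w
  have N_shift: "N (x + s *\<^sub>R y) = s *\<^sub>R N y" for s
    unfolding N_def by (simp add: lin_simps ab algebra_simps)
  have lim_u: "((\<lambda>s. x + s *\<^sub>R y) \<longlongrightarrow> x) (at 0)"
    by (auto intro!: tendsto_eq_intros)
  have lim_Tu: "((\<lambda>s. T (x + s *\<^sub>R y)) \<longlongrightarrow> T x) (at 0)"
    by (auto simp: lin_simps intro!: tendsto_eq_intros)
  (* x + s y stays non-collinear with its image for small s, and its residual is s N y *)
  have "eventually (\<lambda>s. N y \<in> span {x + s *\<^sub>R y, T (x + s *\<^sub>R y)}) (at (0::real))"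
    using eventually_not_collinear[OF lim_u lim_Tu x] eventually_neq_at_within[of 0 0]
  proof eventually_elim
    case (elim s)
    let ?u = "x + s *\<^sub>R y"
    have "N ?u \<in> span {?u, T ?u}"
      unfolding N_def using loc[OF elim(1)]
      by (intro span_diff span_scale) (auto intro: span_base)
    then have "(1 / s) *\<^sub>R N ?u \<in> span {?u, T ?u}" by (rule span_scale)
    then show ?case using elim(2) by (simp add: N_shift)
  qed
  then have "N y \<in> span {x, T x}"
    by (rule in_span_pair_limit[OF lim_u lim_Tu trivial_limit_at x])
  then show ?thesis unfolding N_def .
qed

lemma quadratic_residual_ne_0:
  fixes T :: "'a::real_inner \<Rightarrow> 'a"
  assumes lin: "linear T"
    and loc: "\<And>u. \<not> collinear {0, u, T u} \<Longrightarrow> T (T u) \<in> span {u, T u}"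
    and x: "\<not> collinear {0, x, T x}" and ab: "T (T x) = a *\<^sub>R x + b *\<^sub>R T x"
    and y: "T (T y) - b *\<^sub>R T y - a *\<^sub>R y \<noteq> 0"
  shows "y \<notin> span {x, T x}" and "\<not> collinear {0, y, T y}"
proof -
  show y_W: "y \<notin> span {x, T x}"
    using quadratic_residual_vanishes_on_span[OF lin ab] y by blast
  show "\<not> collinear {0, y, T y}"
  proof
    assume "collinear {0, y, T y}"
    moreover have "y \<noteq> 0" using y_W by (auto simp: span_zero)
    ultimately obtain c where "T y = c *\<^sub>R y" using collinear_imp_scaleR by blast
    then have res: "T (T y) - b *\<^sub>R T y - a *\<^sub>R y = (c * c - b * c - a) *\<^sub>R y"
      by (simp add: linear_scale[OF lin] algebra_simps)
    then have "(c * c - b * c - a) *\<^sub>R y \<in> span {x, T x}"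
      using quadratic_residual_in_span[OF lin loc x ab] by metis
    then have "c * c - b * c - a = 0" by (rule subspace_scaleR_mem_imp_eq_0[OF subspace_span y_W])
    then show False using y res by simp
  qed
qed

lemma quadratic_residual_eigenvector:
  fixes T :: "'a::real_inner \<Rightarrow> 'a" and a b a' b' :: real and y :: 'a
  defines "z \<equiv> T (T y) - b *\<^sub>R T y - a *\<^sub>R y" and "\<mu> \<equiv> (a - a') / (b' - b)"
  assumes lin: "linear T"
    and loc: "\<And>u. \<not> collinear {0, u, T u} \<Longrightarrow> T (T u) \<in> span {u, T u}"
    and x: "\<not> collinear {0, x, T x}" and ab: "T (T x) = a *\<^sub>R x + b *\<^sub>R T x"
    and ab': "T (T y) = a' *\<^sub>R y + b' *\<^sub>R T y" and z: "z \<noteq> 0"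
  shows "b' \<noteq> b" and "T y = \<mu> *\<^sub>R y + (1 / (b' - b)) *\<^sub>R z" and "T z = \<mu> *\<^sub>R z"
proof -
  note lin_simps = linear_add[OF lin] linear_diff[OF lin] linear_scale[OF lin]
  define N where "N w = T (T w) - b *\<^sub>R T w - a *\<^sub>R w" for w
  have N_lin: "N (c1 *\<^sub>R u + c2 *\<^sub>R v) = c1 *\<^sub>R N u + c2 *\<^sub>R N v" for c1 c2 u v
    unfolding N_def by (simp add: lin_simps algebra_simps)
  have y_W: "y \<notin> span {x, T x}"
    using quadratic_residual_ne_0[OF lin loc x ab] z by (auto simp: z_def)
  have z_W: "z \<in> span {x, T x}"
    unfolding z_def by (rule quadratic_residual_in_span[OF lin loc x ab])
  have z_eq: "z = (a' - a) *\<^sub>R y + (b' - b) *\<^sub>R T y"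
    unfolding z_def ab' by (simp add: algebra_simps)
  show "b' \<noteq> b"
  proof
    assume "b' = b"
    then have "(a' - a) *\<^sub>R y \<in> span {x, T x}" using z_eq z_W by simp
    then have "a' - a = 0" by (rule subspace_scaleR_mem_imp_eq_0[OF subspace_span y_W])
    then show False using z_eq \<open>b' = b\<close> z by simp
  qed
  have "(b' - b) *\<^sub>R T y = (a - a') *\<^sub>R y + z" using z_eq by (simp add: algebra_simps)
  then have "(1 / (b' - b)) *\<^sub>R ((b' - b) *\<^sub>R T y) = (1 / (b' - b)) *\<^sub>R ((a - a') *\<^sub>R y + z)"
    by simp
  then show Ty: "T y = \<mu> *\<^sub>R y + (1 / (b' - b)) *\<^sub>R z"
    using \<open>b' \<noteq> b\<close> by (simp add: \<mu>_def scaleR_add_right)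
  have "T z = N (T y)" unfolding z_def N_def by (simp add: lin_simps)
  also have "\<dots> = \<mu> *\<^sub>R N y + (1 / (b' - b)) *\<^sub>R N z" unfolding Ty by (rule N_lin)
  finally show "T z = \<mu> *\<^sub>R z"
    using quadratic_residual_vanishes_on_span[OF lin ab z_W] by (simp add: N_def z_def)
qed

lemma quadratic_coeffs_if_eigenvector:
  fixes T :: "'a::real_vector \<Rightarrow> 'a"
  assumes lin: "linear T" and x: "\<not> collinear {0, x, T x}"
    and ab: "T (T x) = a *\<^sub>R x + b *\<^sub>R T x"
    and eigen: "T (T x - \<mu> *\<^sub>R x) = \<mu> *\<^sub>R (T x - \<mu> *\<^sub>R x)"
  shows "a = - (\<mu> * \<mu>)" and "b = \<mu> + \<mu>"
proof -
  have "(a + \<mu> * \<mu>) *\<^sub>R x + (b - (\<mu> + \<mu>)) *\<^sub>R T x = 0"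
    using eigen by (simp add: linear_diff[OF lin] linear_scale[OF lin] ab algebra_simps)
      (simp flip: scaleR_add_left)
  then have "a + \<mu> * \<mu> = 0 \<and> b - (\<mu> + \<mu>) = 0" by (rule not_collinear_lincomb_eq_0[OF x])
  then show "a = - (\<mu> * \<mu>)" "b = \<mu> + \<mu>" by linarith+
qed

(* If the residual z of y were nonzero, then T - \<mu> maps y into span {z} and kills z; the
   relation at y then makes T x - \<mu> x an eigenvector, so the relation at x is (T - \<mu>)\<^sup>2,
   which also kills y. *)
lemma quadratic_residual_eq_0:
  fixes T :: "'a::real_inner \<Rightarrow> 'a"
  assumes lin: "linear T"
    and loc: "\<And>u. \<not> collinear {0, u, T u} \<Longrightarrow> T (T u) \<in> span {u, T u}"
    and x: "\<not> collinear {0, x, T x}" and ab: "T (T x) = a *\<^sub>R x + b *\<^sub>R T x"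
  shows "T (T y) - b *\<^sub>R T y - a *\<^sub>R y = 0"
proof (rule ccontr)
  assume ne: "T (T y) - b *\<^sub>R T y - a *\<^sub>R y \<noteq> 0"
  define z where "z = T (T y) - b *\<^sub>R T y - a *\<^sub>R y"
  have "z \<noteq> 0" using ne by (simp add: z_def)
  from ne have y_W: "y \<notin> span {x, T x}" and y: "\<not> collinear {0, y, T y}"
    using quadratic_residual_ne_0[OF lin loc x ab] by blast+
  have z_W: "z \<in> span {x, T x}"
    unfolding z_def by (rule quadratic_residual_in_span[OF lin loc x ab])
  obtain a' b' where ab': "T (T y) = a' *\<^sub>R y + b' *\<^sub>R T y"
    using loc[OF y] by (auto simp: span_pair_iff)
  define \<mu> where "\<mu> = (a - a') / (b' - b)"
  define k where "k = 1 / (b' - b)"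
  have "b' \<noteq> b" and Ty: "T y = \<mu> *\<^sub>R y + k *\<^sub>R z" and Tz: "T z = \<mu> *\<^sub>R z"
    using quadratic_residual_eigenvector[OF lin loc x ab ab'] \<open>z \<noteq> 0\<close>
    unfolding z_def \<mu>_def k_def by blast+
  define w where "w = T (T x) - b' *\<^sub>R T x - a' *\<^sub>R x"
  have a': "a' = a + \<mu> * (b - b')" unfolding \<mu>_def using \<open>b' \<noteq> b\<close> by (simp add: field_simps)
  have w_eq: "w = (b - b') *\<^sub>R (T x - \<mu> *\<^sub>R x)"
    unfolding w_def ab a' by (simp add: algebra_simps)
  have "w \<in> span {y, T y}"
    unfolding w_def by (rule quadratic_residual_in_span[OF lin loc y ab'])
  then obtain c1 c2 where "w = c1 *\<^sub>R y + c2 *\<^sub>R T y" unfolding span_pair_iff by blast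
  then have "w = (c1 + c2 * \<mu>) *\<^sub>R y + (c2 * k) *\<^sub>R z" by (simp add: Ty algebra_simps)
  then have "w \<in> span {y, z}" unfolding span_pair_iff by blast
  moreover have "w \<in> span {x, T x}" unfolding w_eq by (intro span_scale span_diff) (auto intro: span_base)
  ultimately obtain c where "w = c *\<^sub>R z"
    using span_pair_inter_subspace[OF subspace_span y_W z_W] by blast
  then have "(b - b') *\<^sub>R T (T x - \<mu> *\<^sub>R x) = (b - b') *\<^sub>R (\<mu> *\<^sub>R (T x - \<mu> *\<^sub>R x))"
    using w_eq Tz by (metis linear_scale[OF lin] scaleR_left_commute)
  then have "T (T x - \<mu> *\<^sub>R x) = \<mu> *\<^sub>R (T x - \<mu> *\<^sub>R x)"
    using \<open>b' \<noteq> b\<close> by (simp del: scaleR_scaleR)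
  then have "a = - (\<mu> * \<mu>)" "b = \<mu> + \<mu>"
    by (rule quadratic_coeffs_if_eigenvector[OF lin x ab])+
  moreover have "T (T y) = \<mu> *\<^sub>R T y + \<mu> *\<^sub>R (T y - \<mu> *\<^sub>R y)"
    by (simp add: Ty linear_add[OF lin] linear_scale[OF lin] Tz algebra_simps)
  ultimately have "z = 0"
    unfolding z_def by (simp add: algebra_simps) (simp flip: scaleR_add_left)
  then show False using \<open>z \<noteq> 0\<close> by contradiction
qed

theorem linear_quadratic_if_locally_quadratic:
  fixes T :: "'a::real_inner \<Rightarrow> 'a"
  assumes lin: "linear T"
    and loc: "\<And>u. \<not> collinear {0, u, T u} \<Longrightarrow> T (T u) \<in> span {u, T u}"
  obtains a b where "\<And>u. T (T u) = a *\<^sub>R u + b *\<^sub>R T u"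
proof (cases "\<forall>u. collinear {0, u, T u}")
  case True
  then obtain c where "\<And>u. T u = c *\<^sub>R u" using linear_scalar_if_collinear[OF lin] by blast
  then have "T (T u) = 0 *\<^sub>R u + c *\<^sub>R T u" for u by simp
  then show ?thesis using that by blast
next
  case False
  then obtain x where x: "\<not> collinear {0, x, T x}" by blast
  then obtain a b where "T (T x) = a *\<^sub>R x + b *\<^sub>R T x" using loc[OF x] unfolding span_pair_iff by blast
  then have "T (T u) = a *\<^sub>R u + b *\<^sub>R T u" for u
    using quadratic_residual_eq_0[OF lin loc x] by (simp add: algebra_simps)
  then show ?thesis using that by blast
qed

lemma bounded_bilinear_matrix_matrix_mult:
  "bounded_bilinear (\<lambda>(A::real^'n^'m) (B::real^'p^'n). A ** B)"
proof -
  have "bilinear (\<lambda>(A::real^'n^'m) (B::real^'p^'n). A ** B)"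
    unfolding bilinear_def
    by (auto intro!: linearI simp: matrix_add_ldistrib matrix_scalar_ac scalar_matrix_assoc
        matrix_matrix_mult_def vec_eq_iff algebra_simps sum.distrib sum_distrib_left)
  then show ?thesis by (simp add: bilinear_conv_bounded_bilinear)
qed

lemma bounded_bilinear_matrix_vector_mult:
  "bounded_bilinear (\<lambda>(A::real^'n^'m) (x::real^'n). A *v x)"
proof -
  have "bilinear (\<lambda>(A::real^'n^'m) (x::real^'n). A *v x)"
    unfolding bilinear_def by (auto intro!: linearI simp: algebra_simps scaleR_matrix_vector_assoc)
  then show ?thesis by (simp add: bilinear_conv_bounded_bilinear)
qed

lemma matrix_vector_mult_uminus [simp]: "(- A) *v x = - (A *v (x :: 'a::ring_1^'n))"
  using matrix_vector_mult_diff_rdistrib[of 0 A x] by simp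

lemma continuous_on_det:
  fixes f :: "'a::topological_space \<Rightarrow> real^'n^'n"
  assumes "continuous_on S f"
  shows "continuous_on S (\<lambda>t. det (f t))"
  unfolding det_def
  by (intro continuous_intros continuous_on_compose2[OF _ assms, of UNIV])
    (auto intro!: linear_continuous_on bounded_linear_vec_nth
      bounded_linear_compose[OF bounded_linear_vec_nth])

lemma det_scaleR: "det (k *\<^sub>R (A::real^'n^'n)) = k ^ CARD('n) * det A"
proof -
  have "k *\<^sub>R A = (k *\<^sub>R mat 1) ** A" by (simp add: scalar_matrix_assoc[symmetric])
  moreover have "det (k *\<^sub>R mat 1 :: real^'n^'n) = k ^ CARD('n)"
    by (subst det_diagonal) (auto simp: mat_def)
  ultimately show ?thesis by (simp add: det_mul)
qed

lemma det_nonzero_near_id: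
  obtains \<delta> where "\<delta> > 0" "\<And>A::real^'n^'n. dist A (mat 1) < \<delta> \<Longrightarrow> det A \<noteq> 0"
proof -
  have "continuous_on UNIV (\<lambda>A::real^'n^'n. det A)"
    by (rule continuous_on_det[OF continuous_on_id])
  then obtain \<delta> where "\<delta> > 0"
    and \<delta>: "\<And>A::real^'n^'n. dist A (mat 1) < \<delta> \<Longrightarrow> dist (det A) (det (mat 1 :: real^'n^'n)) < 1"
    unfolding continuous_on_iff by (metis UNIV_I zero_less_one)
  moreover have "det A \<noteq> 0" if "dist A (mat 1) < \<delta>" for A :: "real^'n^'n"
    using \<delta>[OF that] by auto
  ultimately show ?thesis using that by blast
qed

lemma matrix_quadratic_cases:
  fixes X :: "real^'n^'n"
  assumes X: "\<And>v. X *v (X *v v) = a *\<^sub>R v + b *\<^sub>R (X *v v)"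
  obtains (distinct) r1 r2 where "r1 \<noteq> r2" "(X - r1 *\<^sub>R mat 1) ** (X - r2 *\<^sub>R mat 1) = 0"
  | (double) r where "(X - r *\<^sub>R mat 1) ** (X - r *\<^sub>R mat 1) = 0"
  | (complex) r w where "w \<noteq> 0" "(X - r *\<^sub>R mat 1) ** (X - r *\<^sub>R mat 1) = (- (w * w)) *\<^sub>R mat 1"
proof -
  have shift: "(X - p *\<^sub>R mat 1) ** (X - q *\<^sub>R mat 1) = (a + p * q) *\<^sub>R mat 1"
    if "p + q = b" for p q
    by (rule matrix_eq[THEN iffD2])
      (simp add: X that[symmetric] matrix_vector_mul_assoc[symmetric] algebra_simps
        scaleR_matrix_vector_assoc[symmetric])
  consider "b\<^sup>2 + 4 * a > 0" | "b\<^sup>2 + 4 * a = 0" | "b\<^sup>2 + 4 * a < 0" by linarith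
  then show ?thesis
  proof cases
    case 1
    define d where "d = sqrt (b\<^sup>2 + 4 * a)"
    have "d \<noteq> 0" "a + (b + d) / 2 * ((b - d) / 2) = 0"
      using 1 by (simp_all add: d_def field_simps power2_eq_square)
    moreover have "(b + d) / 2 + (b - d) / 2 = b" by (simp add: field_simps)
    ultimately show ?thesis
      using distinct[of "(b + d) / 2" "(b - d) / 2"] shift[of "(b + d) / 2" "(b - d) / 2"] by simp
  next
    case 2
    then have "a + b / 2 * (b / 2) = 0" by (simp add: field_simps power2_eq_square)
    then show ?thesis using double[of "b / 2"] shift[of "b / 2" "b / 2"] by simp
  next
    case 3
    define w where "w = sqrt (- (b\<^sup>2 + 4 * a)) / 2"
    have "w \<noteq> 0" "a + b / 2 * (b / 2) = - (w * w)"
      using 3 by (simp_all add: w_def field_simps power2_eq_square)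
    then show ?thesis using complex[of w "b / 2"] shift[of "b / 2" "b / 2"] by simp
  qed
qed

lemma complementary_eigenspaces:
  fixes X :: "real^'n^'n"
  assumes "r1 \<noteq> r2" and X: "(X - r1 *\<^sub>R mat 1) ** (X - r2 *\<^sub>R mat 1) = 0"
  defines "A \<equiv> {v. X *v v = r1 *\<^sub>R v}" and "B \<equiv> {v. X *v v = r2 *\<^sub>R v}"
  shows "subspace A" "subspace B" "A \<inter> B = {0}" "{a + b | a b. a \<in> A \<and> b \<in> B} = UNIV"
proof -
  show "subspace A" "subspace B" unfolding A_def B_def subspace_def by (auto simp: algebra_simps)
  show "A \<inter> B = {0}" using \<open>r1 \<noteq> r2\<close> by (auto simp: A_def B_def)
  have XX: "X *v (X *v v) = (r1 + r2) *\<^sub>R (X *v v) - (r1 * r2) *\<^sub>R v" for v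
    using arg_cong[OF X, of "\<lambda>Y. Y *v v"]
    by (simp add: matrix_vector_mul_assoc[symmetric] algebra_simps scaleR_matrix_vector_assoc[symmetric])
  have "v \<in> {a + b | a b. a \<in> A \<and> b \<in> B}" for v
  proof -
    define a where "a = (1 / (r1 - r2)) *\<^sub>R (X *v v - r2 *\<^sub>R v)"
    define b where "b = (1 / (r1 - r2)) *\<^sub>R (r1 *\<^sub>R v - X *v v)"
    have "a \<in> A" "b \<in> B" by (simp_all add: A_def B_def a_def b_def XX algebra_simps)
    have "a + b = (1 / (r1 - r2)) *\<^sub>R ((X *v v - r2 *\<^sub>R v) + (r1 *\<^sub>R v - X *v v))"
      by (simp only: a_def b_def scaleR_add_right)
    also have "\<dots> = (1 / (r1 - r2)) *\<^sub>R ((r1 - r2) *\<^sub>R v)" by (simp add: algebra_simps)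
    also have "\<dots> = v" using \<open>r1 \<noteq> r2\<close> by simp
    finally have "v = a + b" ..
    with \<open>a \<in> A\<close> \<open>b \<in> B\<close> show ?thesis by blast
  qed
  then show "{a + b | a b. a \<in> A \<and> b \<in> B} = UNIV" by blast
qed

section \<open>Lifting a projective one-parameter group\<close>

lemma continuous_eq_or_neg_constant:
  fixes f g :: "real \<Rightarrow> 'a::real_normed_vector"
  assumes "continuous_on UNIV f" "continuous_on UNIV g"
    and "\<And>t. f t = g t \<or> f t = - g t" and "\<And>t. g t \<noteq> 0"
  shows "(\<forall>t. f t = g t) \<or> (\<forall>t. f t = - g t)"
proof -
  have "closed {t. f t = g t}" "closed {t. f t = - g t}"
    using assms(1,2) by (auto intro!: closed_Collect_eq continuous_intros)
  moreover have "{t. f t = g t} \<inter> {t. f t = - g t} \<inter> UNIV = {}"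
  proof -
    have "g t \<noteq> - g t" for t
      using assms(4)[of t] by (metis add_eq_0_iff2 scaleR_2 scaleR_eq_0_iff zero_neq_numeral)
    then show ?thesis by auto (metis)
  qed
  moreover have "UNIV \<subseteq> {t. f t = g t} \<union> {t. f t = - g t}" using assms(3) by auto
  ultimately have "{t. f t = g t} \<inter> UNIV = {} \<or> {t. f t = - g t} \<inter> UNIV = {}"
    using connected_closedD[OF connected_UNIV] by blast
  then show ?thesis using assms(3) by auto
qed

lemma proj_hom_unimodular_lift:
  fixes M :: "real \<Rightarrow> real^'n^'n"
  assumes cont: "continuous_on UNIV M" and hom: "is_proj_hom M"
  obtains N d where "continuous_on UNIV N" "\<And>t. det (N t) \<noteq> 0" "\<And>t. d t \<noteq> 0"
    "\<And>t. M t = d t *\<^sub>R N t" "\<And>s t. N (s + t) = N s ** N t \<or> N (s + t) = - (N s ** N t)"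
proof -
  define n where "n = CARD('n)"
  have detM: "det (M t) \<noteq> 0" for t
    using hom invertible_det_nz unfolding is_proj_hom_def by blast
  define d where "d t = \<bar>det (M t)\<bar> powr (1 / real n)" for t
  have d0: "d t > 0" for t unfolding d_def using detM by simp
  have dn: "d t ^ n = \<bar>det (M t)\<bar>" for t
    using d0[of t] detM[of t] by (simp add: d_def powr_realpow[symmetric] powr_powr n_def)
  define N where "N t = (1 / d t) *\<^sub>R M t" for t
  have detN: "\<bar>det (N t)\<bar> = 1" for t
    unfolding N_def det_scaleR n_def[symmetric] using dn[of t] d0[of t] detM[of t]
    by (simp add: abs_mult power_one_over)
  have sign_hom: "N (s + t) = N s ** N t \<or> N (s + t) = - (N s ** N t)" for s t
  proof -
    obtain c where "M (s + t) = c *\<^sub>R (M s ** M t)" using hom unfolding is_proj_hom_def by blast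
    moreover define k where "k = c * d s * d t / d (s + t)"
    ultimately have k: "N (s + t) = k *\<^sub>R (N s ** N t)"
      unfolding N_def using d0[of s] d0[of t] d0[of "s + t"]
      by (simp add: matrix_scalar_ac scalar_matrix_assoc[symmetric])
    then have "\<bar>k\<bar> ^ n = 1"
      using detN[of "s + t"] detN[of s] detN[of t] by (simp add: det_scaleR det_mul abs_mult n_def power_abs)
    then have "\<bar>k\<bar> = 1" using power_eq_1_iff[of "\<bar>k\<bar>" n] by (simp add: n_def)
    then show ?thesis using k by (cases "k \<ge> 0") auto
  qed
  show ?thesis
  proof (rule that[OF _ _ _ _ sign_hom])
    show "continuous_on UNIV N"
      unfolding N_def d_def using detM
      by (intro continuous_intros continuous_on_det[OF cont] cont) auto
    show "M t = d t *\<^sub>R N t" for t unfolding N_def using d0[of t] by simp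
    show "det (N t) \<noteq> 0" "d t \<noteq> 0" for t using detN[of t] d0[of t] by auto
  qed
qed

lemma continuous_sign_hom_sign_in_second_argument:
  fixes N :: "real \<Rightarrow> real^'n^'n"
  assumes cont: "continuous_on UNIV N" and det: "\<And>t. det (N t) \<noteq> 0"
    and sign_hom: "\<And>s t. N (s + t) = N s ** N t \<or> N (s + t) = - (N s ** N t)"
  obtains \<sigma> where "\<sigma> * \<sigma> = 1" "\<And>t. N (s + t) = \<sigma> *\<^sub>R (N s ** N t)"
proof -
  have "N s ** N t \<noteq> 0" for t
  proof
    assume "N s ** N t = 0"
    then have "det (N s) * det (N t) = 0" by (metis det_0 det_mul mat_0)
    then show False using det[of s] det[of t] by simp
  qed
  moreover have "continuous_on UNIV (\<lambda>t. N (s + t))"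
    by (rule continuous_on_compose2[OF cont]) (auto intro!: continuous_intros)
  moreover have "continuous_on UNIV (\<lambda>t. N s ** N t)"
    using bounded_bilinear.continuous_on[OF bounded_bilinear_matrix_matrix_mult
        continuous_on_const cont] .
  ultimately have "(\<forall>t. N (s + t) = N s ** N t) \<or> (\<forall>t. N (s + t) = - (N s ** N t))"
    using continuous_eq_or_neg_constant sign_hom by blast
  then show ?thesis
  proof
    assume "\<forall>t. N (s + t) = N s ** N t"
    then show ?thesis using that[of 1] by simp
  next
    assume "\<forall>t. N (s + t) = - (N s ** N t)"
    then show ?thesis using that[of "-1"] by simp
  qed
qed

lemma continuous_sign_hom_imp_hom:
  fixes N :: "real \<Rightarrow> real^'n^'n"
  assumes cont: "continuous_on UNIV N" and det: "\<And>t. det (N t) \<noteq> 0"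
    and sign_hom: "\<And>s t. N (s + t) = N s ** N t \<or> N (s + t) = - (N s ** N t)"
  obtains \<sigma> :: real where "\<sigma> * \<sigma> = 1" "N 0 = \<sigma> *\<^sub>R mat 1" "\<And>s t. N (s + t) = \<sigma> *\<^sub>R (N s ** N t)"
proof -
  have "\<forall>s. \<exists>\<sigma>. \<sigma> * \<sigma> = 1 \<and> (\<forall>t. N (s + t) = \<sigma> *\<^sub>R (N s ** N t))"
    using continuous_sign_hom_sign_in_second_argument[OF assms] by blast
  then have "\<exists>\<sigma>. \<forall>s. \<sigma> s * \<sigma> s = 1 \<and> (\<forall>t. N (s + t) = \<sigma> s *\<^sub>R (N s ** N t))"
    by (rule choice)
  then obtain \<sigma> where \<sigma>: "\<And>s. \<sigma> s * \<sigma> s = 1" "\<And>s t. N (s + t) = \<sigma> s *\<^sub>R (N s ** N t)"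
    by blast
  obtain N0' where N0': "N0' ** N 0 = mat 1"
    using det[of 0] invertible_det_nz invertible_left_inverse by blast
  have "N 0 ** mat 1 = N 0 ** (\<sigma> 0 *\<^sub>R N 0)"
    using \<sigma>(2)[of 0 0] by (simp add: matrix_scalar_ac scalar_matrix_assoc)
  then have "N0' ** (N 0 ** mat 1) = N0' ** (N 0 ** (\<sigma> 0 *\<^sub>R N 0))" by simp
  then have "mat 1 = \<sigma> 0 *\<^sub>R N 0" by (simp only: matrix_mul_assoc N0' matrix_mul_lid)
  then have N0: "N 0 = \<sigma> 0 *\<^sub>R mat 1" using \<sigma>(1)[of 0] by (simp add: scaleR_scaleR)
  have "\<sigma> s = \<sigma> 0" for s
  proof -
    have "N s = (\<sigma> s * \<sigma> 0) *\<^sub>R N s"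
      using \<sigma>(2)[of s 0] unfolding N0 by (simp add: matrix_scalar_ac scalar_matrix_assoc)
    then have "(1 - \<sigma> s * \<sigma> 0) *\<^sub>R N s = 0" by (simp add: algebra_simps)
    moreover have "N s \<noteq> 0" using det[of s] by (auto simp flip: mat_0)
    ultimately have "\<sigma> s * \<sigma> 0 = 1" by simp
    then show ?thesis using \<sigma>(1)[of 0] by (metis mult.assoc mult.commute mult_1)
  qed
  then show ?thesis using that[of "\<sigma> 0"] \<sigma> N0 by simp
qed

lemma proj_hom_lift:
  fixes M :: "real \<Rightarrow> real^'n^'n"
  assumes "continuous_on UNIV M" and "is_proj_hom M"
  obtains P c where "continuous_on UNIV P" "P 0 = mat 1" "\<And>s t. P (s + t) = P s ** P t"
    "\<And>t. c t \<noteq> 0" "\<And>t. M t = c t *\<^sub>R P t"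
proof -
  obtain N d where N: "continuous_on UNIV N" "\<And>t. det (N t) \<noteq> 0" "\<And>t. d t \<noteq> 0"
    "\<And>t. M t = d t *\<^sub>R N t" "\<And>s t. N (s + t) = N s ** N t \<or> N (s + t) = - (N s ** N t)"
    using proj_hom_unimodular_lift[OF assms] by blast
  obtain \<sigma> where \<sigma>: "\<sigma> * \<sigma> = 1" "N 0 = \<sigma> *\<^sub>R mat 1" "\<And>s t. N (s + t) = \<sigma> *\<^sub>R (N s ** N t)"
    using continuous_sign_hom_imp_hom[OF N(1,2,5)] by blast
  show ?thesis
  proof
    show "continuous_on UNIV (\<lambda>t. \<sigma> *\<^sub>R N t)" by (intro continuous_intros N(1))
    show "\<sigma> *\<^sub>R N 0 = mat 1" using \<sigma>(1,2) by simp
    show "\<sigma> *\<^sub>R N (s + t) = (\<sigma> *\<^sub>R N s) ** (\<sigma> *\<^sub>R N t)" for s t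
      using \<sigma>(1,3) by (simp add: matrix_scalar_ac scalar_matrix_assoc[symmetric])
    show "d t * \<sigma> \<noteq> 0" for t using N(3) \<sigma>(1) by auto
    show "M t = (d t * \<sigma>) *\<^sub>R (\<sigma> *\<^sub>R N t)" for t using N(4) \<sigma>(1) by (simp add: mult.assoc)
  qed
qed

section \<open>Continuous one-parameter matrix groups are differentiable\<close>

lemma continuous_average_invertible:
  fixes P :: "real \<Rightarrow> real^'n^'n"
  assumes cont: "continuous_on UNIV P" and P0: "P 0 = mat 1"
  obtains h where "h > 0" "invertible (integral {0..h} P)"
proof -
  obtain \<delta> where "\<delta> > 0" and \<delta>: "\<And>A::real^'n^'n. dist A (mat 1) < \<delta> \<Longrightarrow> det A \<noteq> 0"
    using det_nonzero_near_id by blast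
  then obtain \<eta> where "\<eta> > 0" and \<eta>: "\<And>s. dist s 0 < \<eta> \<Longrightarrow> dist (P s) (P 0) < \<delta> / 2"
    using cont unfolding continuous_on_iff by (metis UNIV_I half_gt_zero)
  define h where "h = \<eta> / 2"
  have "h > 0" using \<open>\<eta> > 0\<close> by (simp add: h_def)
  define K where "K = integral {0..h} P"
  have "norm (integral {0..h} (\<lambda>s. P s - mat 1)) \<le> \<delta> / 2 * (h - 0)"
  proof (rule integral_bound)
    show "continuous_on {0..h} (\<lambda>s. P s - mat 1)"
      by (intro continuous_intros continuous_on_subset[OF cont]) auto
    show "norm (P s - mat 1) \<le> \<delta> / 2" if "s \<in> {0..h}" for s
      using \<eta>[of s] that P0 \<open>\<eta> > 0\<close> by (auto simp: dist_norm h_def)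
  qed (use \<open>h > 0\<close> \<open>\<delta> > 0\<close> in auto)
  moreover have "integral {0..h} (\<lambda>s. P s - mat 1) = K - h *\<^sub>R mat 1"
    using \<open>h > 0\<close> integrable_continuous_real[OF continuous_on_subset[OF cont, of "{0..h}"]]
    by (simp add: K_def integral_diff[OF _ integrable_const_ivl])
  ultimately have bound: "norm (K - h *\<^sub>R mat 1) \<le> \<delta> / 2 * h" by simp
  have "(1 / h) *\<^sub>R K - mat 1 = (1 / h) *\<^sub>R (K - h *\<^sub>R mat 1)"
    using \<open>h > 0\<close> by (simp add: scaleR_diff_right)
  then have "dist ((1 / h) *\<^sub>R K) (mat 1) = (1 / h) * norm (K - h *\<^sub>R mat 1)"
    using \<open>h > 0\<close> by (simp add: dist_norm)
  also have "\<dots> \<le> \<delta> / 2" using bound \<open>h > 0\<close> by (simp add: field_simps)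
  finally have "dist ((1 / h) *\<^sub>R K) (mat 1) \<le> \<delta> / 2" .
  then have "det ((1 / h) *\<^sub>R K) \<noteq> 0" using \<delta> \<open>\<delta> > 0\<close> by simp
  then have "invertible K" by (simp add: det_scaleR invertible_det_nz)
  then show ?thesis using that \<open>h > 0\<close> unfolding K_def by blast
qed

lemma has_vector_derivative_shift:
  assumes "(f has_vector_derivative D) (at (t + c))"
  shows "((\<lambda>u. f (u + c)) has_vector_derivative D) (at t)"
proof -
  have shift: "((\<lambda>u. u + c) has_vector_derivative 1) (at t)" by (auto intro!: derivative_eq_intros)
  show ?thesis using vector_diff_chain_at[OF shift, of f D] assms by (simp add: o_def)
qed

lemma integral_has_vector_derivative_at:
  fixes f :: "real \<Rightarrow> 'a::banach"
  assumes "continuous_on UNIV f" and "a < u"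
  shows "((\<lambda>u. integral {a..u} f) has_vector_derivative f u) (at u)"
proof -
  have "((\<lambda>u. integral {a..u} f) has_vector_derivative f u) (at u within {a..u + 1})"
    using assms by (intro integral_has_vector_derivative continuous_on_subset[OF assms(1)]) auto
  then show ?thesis
    using assms(2) by (auto intro: has_vector_derivative_within_subset
        simp: has_vector_derivative_within_open[of u "{a<..<u + 1}", symmetric])
qed

lemma continuous_matrix_group_differentiable:
  fixes P :: "real \<Rightarrow> real^'n^'n"
  assumes cont: "continuous_on UNIV P" and add: "\<And>s t. P (s + t) = P s ** P t"
    and P0: "P 0 = mat 1"
  obtains X where "(P has_vector_derivative X) (at 0)"
proof -
  obtain h where "h > 0" and "invertible (integral {0..h} P)"
    using continuous_average_invertible[OF cont P0] by blast
  then obtain K' where K': "integral {0..h} P ** K' = mat 1" unfolding invertible_def by blast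
  have int: "P integrable_on {a..b}" for a b
    by (rule integrable_continuous_real[OF continuous_on_subset[OF cont]]) simp
  define F where "F u = integral {-1..u} P" for u
  have F_deriv: "(F has_vector_derivative P u) (at u)" if "u > -1" for u
    unfolding F_def by (rule integral_has_vector_derivative_at[OF cont that])
  have P_eq: "P e = (F (e + h) - F e) ** K'" if "e \<in> {-1<..<1}" for e
  proof -
    have "integral {0..h} (\<lambda>s. P e ** P s) = P e ** integral {0..h} P"
      using integral_linear[OF int bounded_bilinear.bounded_linear_right[OF
            bounded_bilinear_matrix_matrix_mult]]
      by (simp add: o_def)
    then have "P e ** integral {0..h} P = integral {0..h} (P \<circ> (+) e)" by (simp add: add o_def)
    also have "\<dots> = integral {e..e + h} P" by (simp add: integral_shift_Icc_real add.commute)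
    also have "\<dots> = F (e + h) - F e"
      using Henstock_Kurzweil_Integration.integral_combine[OF _ _ int, of "-1" e "e + h"] that \<open>h > 0\<close>
      by (simp add: F_def algebra_simps)
    finally show ?thesis using K' by (metis matrix_mul_assoc matrix_mul_rid)
  qed
  have "((\<lambda>e. F (e + h)) has_vector_derivative P h) (at 0)"
    using has_vector_derivative_shift[of F "P h" 0 h] F_deriv[of h] \<open>h > 0\<close> by simp
  moreover have "(F has_vector_derivative P 0) (at 0)" using F_deriv \<open>h > 0\<close> by simp
  ultimately have "((\<lambda>e. (F (e + h) - F e) ** K') has_vector_derivative (P h - P 0) ** K') (at 0)"
    by (intro bounded_linear.has_vector_derivative[OF
        bounded_bilinear.bounded_linear_left[OF bounded_bilinear_matrix_matrix_mult]]
        has_vector_derivative_diff)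
  then have "(P has_vector_derivative (P h - P 0) ** K') (at 0)"
    by (rule has_vector_derivative_transform_within_open[of _ _ _ "{-1<..<1}"]) (use P_eq in auto)
  then show ?thesis using that by blast
qed

lemma continuous_matrix_group_generator:
  fixes P :: "real \<Rightarrow> real^'n^'n"
  assumes cont: "continuous_on UNIV P" and add: "\<And>s t. P (s + t) = P s ** P t"
    and P0: "P 0 = mat 1"
  obtains X where "\<And>t. (P has_vector_derivative X ** P t) (at t)" "\<And>t. X ** P t = P t ** X"
proof -
  obtain X where X: "(P has_vector_derivative X) (at 0)"
    using continuous_matrix_group_differentiable[OF assms] by blast
  have left: "(P has_vector_derivative X ** P t) (at t)" for t
  proof -
    have "((\<lambda>s. P s ** P t) has_vector_derivative X ** P t) (at (t + - t))"
      using bounded_linear.has_vector_derivative[OF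
          bounded_bilinear.bounded_linear_left[OF bounded_bilinear_matrix_matrix_mult] X] by simp
    from has_vector_derivative_shift[OF this] show ?thesis by (simp add: add[symmetric])
  qed
  have right: "(P has_vector_derivative P t ** X) (at t)" for t
  proof -
    have "((\<lambda>s. P t ** P s) has_vector_derivative P t ** X) (at (t + - t))"
      using bounded_linear.has_vector_derivative[OF
          bounded_bilinear.bounded_linear_right[OF bounded_bilinear_matrix_matrix_mult] X] by simp
    from has_vector_derivative_shift[OF this] show ?thesis by (simp add: add[symmetric])
  qed
  show ?thesis using that left vector_derivative_unique_at[OF left right] by blast
qed

section \<open>Orbits of a one-parameter matrix group\<close>

lemma has_vector_derivative_in_subspace:
  fixes f :: "real \<Rightarrow> 'a::euclidean_space"
  assumes S: "subspace S" and f: "(f has_vector_derivative v) (at t)" and f_S: "\<And>s. f s \<in> S"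
  shows "v \<in> S"
proof -
  obtain p r where p: "p \<in> span S" and r: "\<And>w. w \<in> span S \<Longrightarrow> orthogonal r w" and v: "v = p + r"
    using orthogonal_subspace_decomp_exists by blast
  have "((\<lambda>s. f s \<bullet> r) has_real_derivative v \<bullet> r) (at t)"
    using bounded_linear.has_vector_derivative[OF bounded_linear_inner_left f]
    by (simp add: has_real_derivative_iff_has_vector_derivative)
  moreover have "f s \<bullet> r = 0" for s
    using r[OF span_base[OF f_S[of s]]] by (simp add: orthogonal_def inner_commute)
  ultimately have "((\<lambda>s. 0) has_real_derivative v \<bullet> r) (at t)" by simp
  then have "v \<bullet> r = 0" using DERIV_const DERIV_unique by blast
  moreover have "p \<bullet> r = 0" using r[OF p] by (simp add: orthogonal_def inner_commute)
  ultimately have "r = 0" unfolding v by (simp add: inner_add_left)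
  then show ?thesis using p v S by (metis add.right_neutral span_eq_iff)
qed

locale matrix_flow =
  fixes P :: "real \<Rightarrow> real^'n^'n" and X :: "real^'n^'n"
  assumes add: "P (s + t) = P s ** P t" and zero: "P 0 = mat 1"
    and has_derivative: "(P has_vector_derivative X ** P t) (at t)"
    and commute: "X ** P t = P t ** X"
begin

lemma orbit_has_derivative: "((\<lambda>t. P t *v v) has_vector_derivative X *v (P t *v v)) (at t)"
  using bounded_linear.has_vector_derivative[OF bounded_bilinear.bounded_linear_left[OF
        bounded_bilinear_matrix_vector_mult] has_derivative]
  by (simp add: matrix_vector_mul_assoc)

lemma orbit_unique:
  assumes q: "\<And>t. (q has_vector_derivative X *v q t) (at t)"
  shows "q t = P t *v q 0"
proof -
  have "((\<lambda>s. P (- s) *v q s) has_vector_derivative 0) (at s)" for s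
  proof -
    have "((\<lambda>s. P (- s)) has_vector_derivative - (X ** P (- s))) (at s)"
      using vector_diff_chain_at[OF has_vector_derivative_minus[OF has_vector_derivative_id]
          has_derivative[of "- s"]] by (simp add: o_def)
    from bounded_bilinear.has_vector_derivative[OF bounded_bilinear_matrix_vector_mult this q]
    show ?thesis
      by (simp add: matrix_vector_mul_assoc commute)
  qed
  then obtain C where "\<And>s. P (- s) *v q s = C"
    using has_derivative_zero_constant[of UNIV "\<lambda>s. P (- s) *v q s"]
    unfolding has_vector_derivative_def by auto
  then have "P (- t) *v q t = P (- 0) *v q 0" by metis
  then have "P (- t) *v q t = q 0" by (simp add: zero)
  moreover have "P t ** P (- t) = mat 1" using add[of t "- t"] zero by simp
  then have "q t = P t *v (P (- t) *v q t)" by (simp add: matrix_vector_mul_assoc)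
  ultimately show ?thesis by simp
qed

lemma generator_mem_subspace:
  assumes "subspace S" and "\<And>t. P t *v v \<in> S"
  shows "X *v v \<in> S"
  using has_vector_derivative_in_subspace[OF assms(1) orbit_has_derivative[of v 0] assms(2)]
  by (simp add: zero)

lemma orbit_in_plane_imp_quadratic:
  assumes S: "subspace S" "dim S = 2" and orbit: "\<And>t. P t *v u \<in> S"
    and u: "\<not> collinear {0, u, X *v u}"
  shows "X *v (X *v u) \<in> span {u, X *v u}"
proof -
  have Xu: "X *v u \<in> S" by (rule generator_mem_subspace[OF S(1) orbit])
  have "X *v (P t *v u) \<in> S" for t
    by (rule generator_mem_subspace[OF S(1)]) (simp add: matrix_vector_mul_assoc add[symmetric] orbit)
  then have "P t *v (X *v u) \<in> S" for t by (simp add: matrix_vector_mul_assoc commute)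
  then have "X *v (X *v u) \<in> S" by (rule generator_mem_subspace[OF S(1)])
  moreover have "S \<subseteq> span {u, X *v u}"
  proof (rule card_ge_dim_independent)
    show "{u, X *v u} \<subseteq> S" using orbit[of 0] Xu by (simp add: zero)
    show "independent {u, X *v u}" "dim S \<le> card {u, X *v u}"
      using not_collinear_independent[OF u] S(2) by auto
  qed
  ultimately show ?thesis by blast
qed

lemma quadratic_if_orbits_in_planes:
  assumes "\<And>u. u \<noteq> 0 \<Longrightarrow> \<exists>S. subspace S \<and> dim S = 2 \<and> (\<forall>t. P t *v u \<in> S)"
  obtains a b where "\<And>u. X *v (X *v u) = a *\<^sub>R u + b *\<^sub>R (X *v u)"
proof -
  have "X *v (X *v u) \<in> span {u, X *v u}" if u: "\<not> collinear {0, u, X *v u}" for u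
  proof -
    have "u \<noteq> 0" using u by auto
    then show ?thesis using assms orbit_in_plane_imp_quadratic u by blast
  qed
  then show ?thesis using linear_quadratic_if_locally_quadratic[OF matrix_vector_mul_linear] that
    by blast
qed

lemma eigenvector_orbit:
  assumes "X *v a = r *\<^sub>R a"
  shows "P t *v a = exp (r * t) *\<^sub>R a"
proof -
  have "exp (r * t) *\<^sub>R a = P t *v (exp (r * 0) *\<^sub>R a)"
    by (rule orbit_unique[where q = "\<lambda>t. exp (r * t) *\<^sub>R a"])
      (auto intro!: derivative_eq_intros simp: assms matrix_vector_mult_scaleR)
  then show ?thesis by simp
qed

lemma nilpotent_shift_orbit:
  assumes "(X - r *\<^sub>R mat 1) ** (X - r *\<^sub>R mat 1) = 0"
  shows "P t *v v = exp (r * t) *\<^sub>R (v + t *\<^sub>R ((X - r *\<^sub>R mat 1) *v v))"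
proof -
  define N where "N = X - r *\<^sub>R mat 1"
  have X: "X *v w = r *\<^sub>R w + N *v w" for w
    by (simp add: N_def algebra_simps scaleR_matrix_vector_assoc[symmetric])
  have NN: "N *v (N *v w) = 0" for w using assms by (simp add: N_def matrix_vector_mul_assoc)
  have "exp (r * t) *\<^sub>R (v + t *\<^sub>R (N *v v)) = P t *v (exp (r * 0) *\<^sub>R (v + 0 *\<^sub>R (N *v v)))"
    by (rule orbit_unique[where q = "\<lambda>t. exp (r * t) *\<^sub>R (v + t *\<^sub>R (N *v v))"])
      (auto intro!: derivative_eq_intros simp: X NN algebra_simps)
  then show ?thesis by (simp add: N_def)
qed

lemma rotation_orbit:
  assumes "w \<noteq> 0" and "(X - r *\<^sub>R mat 1) ** (X - r *\<^sub>R mat 1) = (- (w * w)) *\<^sub>R mat 1"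
  shows "P (pi / w) = (- exp (r * pi / w)) *\<^sub>R mat 1"
proof (rule matrix_eq[THEN iffD2], rule allI)
  fix v
  define J where "J = (1 / w) *\<^sub>R (X - r *\<^sub>R mat 1)"
  have X: "X *v u = r *\<^sub>R u + w *\<^sub>R (J *v u)" for u
    using \<open>w \<noteq> 0\<close> by (simp add: J_def algebra_simps scaleR_matrix_vector_assoc[symmetric])
  have JJ: "J *v (J *v u) = - u" for u
    using assms \<open>w \<noteq> 0\<close> by (simp add: J_def matrix_vector_mul_assoc matrix_scalar_ac
        scalar_matrix_assoc[symmetric])
  have "exp (r * t) *\<^sub>R (cos (w * t) *\<^sub>R v + sin (w * t) *\<^sub>R (J *v v))
      = P t *v (exp (r * 0) *\<^sub>R (cos (w * 0) *\<^sub>R v + sin (w * 0) *\<^sub>R (J *v v)))" for t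
    by (rule orbit_unique[where q = "\<lambda>t. exp (r * t) *\<^sub>R (cos (w * t) *\<^sub>R v + sin (w * t) *\<^sub>R (J *v v))"])
      (auto intro!: derivative_eq_intros simp: X JJ algebra_simps)
  from this[of "pi / w"] show "P (pi / w) *v v = ((- exp (r * pi / w)) *\<^sub>R mat 1) *v v"
    using \<open>w \<noteq> 0\<close> by (simp add: scaleR_matrix_vector_assoc[symmetric])
qed

end

lemma orbit_in_proper_line_lift:
  assumes "\<And>t. M t = c t *\<^sub>R P t" "\<And>t. c t \<noteq> 0" and "orbit_in_proper_line M u"
  shows "\<exists>S. subspace S \<and> dim S = 2 \<and> (\<forall>t. P t *v u \<in> S)"
proof -
  obtain S where S: "subspace S" "dim S = 2" and MS: "\<And>t. M t *v u \<in> S"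
    using assms(3) unfolding orbit_in_proper_line_def by blast
  have "P t *v u = (1 / c t) *\<^sub>R (M t *v u)" for t
    using assms(1,2) by (simp add: scaleR_matrix_vector_assoc[symmetric])
  then have "P t *v u \<in> S" for t using subspace_scale[OF S(1) MS] by metis
  then show ?thesis using S by blast
qed

lemma reparam_scale: "k \<noteq> 0 \<Longrightarrow> reparam (\<lambda>t. k * t)"
  unfolding reparam_def
  by (auto intro!: bij_betw_byWitness[where f' = "\<lambda>t. t / k"] continuous_intros
      simp: algebra_simps)

lemma parabolicI:
  assumes M: "\<And>t. M t = c t *\<^sub>R P t" "\<And>t. c t \<noteq> 0" and "\<pi> ** \<pi> = 0"
    and P: "\<And>t v. P t *v v = exp (r * t) *\<^sub>R (v + t *\<^sub>R (\<pi> *v v))"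
  shows "parabolic M"
  unfolding parabolic_def
proof (intro exI conjI allI impI)
  show "reparam (\<lambda>t. 1 * t)" by (rule reparam_scale) simp
  show "\<pi> ** \<pi> = 0" by fact
  fix t x
  have "M (1 * t) *v x = (c t * exp (r * t)) *\<^sub>R (x + t *\<^sub>R (\<pi> *v x))"
    by (simp add: M P scaleR_matrix_vector_assoc[symmetric])
  then show "proj_eq (M (1 * t) *v x) (x + t *\<^sub>R (\<pi> *v x))"
    unfolding proj_eq_def using M(2) by (metis exp_not_eq_zero mult_eq_0_iff)
qed

lemma hyperbolicI:
  assumes M: "\<And>t. M t = c t *\<^sub>R P t" "\<And>t. c t \<noteq> 0" and "r1 \<noteq> r2"
    and AB: "subspace A" "subspace B" "A \<inter> B = {0}" "{a + b | a b. a \<in> A \<and> b \<in> B} = UNIV"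
    and PA: "\<And>t a. a \<in> A \<Longrightarrow> P t *v a = exp (r1 * t) *\<^sub>R a"
    and PB: "\<And>t b. b \<in> B \<Longrightarrow> P t *v b = exp (r2 * t) *\<^sub>R b"
  shows "hyperbolic M"
  unfolding hyperbolic_def
proof (intro exI conjI allI impI)
  show "reparam (\<lambda>t. (1 / (r2 - r1)) * t)" by (rule reparam_scale) (use \<open>r1 \<noteq> r2\<close> in simp)
  fix a b t assume "a \<in> A" "b \<in> B"
  define s where "s = (1 / (r2 - r1)) * t"
  have "exp (r2 * s) = exp (r1 * s) * exp t"
    using \<open>r1 \<noteq> r2\<close> by (simp add: s_def field_simps flip: exp_add)
  then have "M s *v (a + b) = (c s * exp (r1 * s)) *\<^sub>R (a + exp t *\<^sub>R b)"
    using \<open>a \<in> A\<close> \<open>b \<in> B\<close>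
    by (simp add: M PA PB algebra_simps scaleR_matrix_vector_assoc[symmetric])
  then show "proj_eq (M ((1 / (r2 - r1)) * t) *v (a + b)) (a + exp t *\<^sub>R b)"
    unfolding proj_eq_def s_def using M(2) by (metis exp_not_eq_zero mult_eq_0_iff)
qed (use AB in auto)

lemma not_proj_injective_if_scalar:
  assumes M: "\<And>t. M t = c t *\<^sub>R P t" "\<And>t. c t \<noteq> 0"
    and "P 0 = mat 1" "P t0 = k *\<^sub>R mat 1" "k \<noteq> 0" "t0 \<noteq> 0"
  shows "\<not> proj_injective M"
proof -
  have "M t0 = (c t0 * k / c 0) *\<^sub>R M 0" using assms by simp
  moreover have "c t0 * k / c 0 \<noteq> 0" using assms by simp
  ultimately show ?thesis using \<open>t0 \<noteq> 0\<close> unfolding proj_injective_def by blast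
qed

theorem lemma1p1:
  fixes M :: "real \<Rightarrow> real ^ 'n ^ 'n"
  assumes "linear_flow M"
  shows "parabolic M \<or> hyperbolic M"
proof -
  have cont: "continuous_on UNIV M" and hom: "is_proj_hom M" and inj: "proj_injective M"
    and orbits: "\<And>x. x \<noteq> 0 \<Longrightarrow> orbit_in_proper_line M x"
    using assms unfolding linear_flow_def by auto
  obtain P c where P: "continuous_on UNIV P" "P 0 = mat 1" "\<And>s t. P (s + t) = P s ** P t"
    and M: "\<And>t. c t \<noteq> 0" "\<And>t. M t = c t *\<^sub>R P t"
    using proj_hom_lift[OF cont hom] by blast
  obtain X where X: "\<And>t. (P has_vector_derivative X ** P t) (at t)" "\<And>t. X ** P t = P t ** X"
    using continuous_matrix_group_generator[OF P(1,3,2)] by blast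
  interpret matrix_flow P X by unfold_locales (use P X in auto)
  obtain a b where "\<And>u. X *v (X *v u) = a *\<^sub>R u + b *\<^sub>R (X *v u)"
    using quadratic_if_orbits_in_planes orbit_in_proper_line_lift[OF M(2,1) orbits] by blast
  then show ?thesis
  proof (cases rule: matrix_quadratic_cases)
    case (distinct r1 r2)
    then show ?thesis
      using hyperbolicI[OF M(2,1) distinct(1) complementary_eigenspaces[OF distinct]]
        eigenvector_orbit by auto
  next
    case (double r)
    then show ?thesis using parabolicI[OF M(2,1) double nilpotent_shift_orbit[OF double]] by blast
  next
    case (complex r w)
    then show ?thesis
      using not_proj_injective_if_scalar[OF M(2,1) P(2) rotation_orbit[OF complex]] inj
        pi_gt_zero by auto
  qed
qed

end
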